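(* Let $K\ge 1$ be an integer, let $h_1,\dots,h_K>0$, $\sigma^2>0$ and $P>0$ be real numbers. For $g\in\mathbb{R}$ and $b=(b_1,\dots,b_K)\in\mathbb{R}^K$ define $$\mathsf{MSE}(g,b)=\sum_{k=1}^{K}(g h_k b_k-1)^2+\sigma^2 g^2 .$$ Consider the problem of minimizing $\mathsf{MSE}(g,b)$ over $g\in\mathbb{R}$, $b\in\mathbb{R}^K$ subject to $\sum_{k=1}^K b_k^2\le P$. Set $\beta_k=\dfrac{P h_k}{\sigma^2+P h_k^2}$ for $k=1,\dots,K$. Then the minimum value of this problem equals $$\mathsf{MSE}^\star=\sum_{k=1}^{K}\frac{\sigma^2}{\sigma^2+P h_k^2},$$ and it is attained at $$g^\star=\sqrt{\frac{1}{P}\sum_{k=1}^{K}\beta_k^2},\qquad b_k^\star=\beta_k\sqrt{\frac{P}{\sum_{j=1}^{K}\beta_j^2}},\quad k=1,\dots,K.$$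
   Context: This models an over-the-air computation system with $K$ single-antenna sensors: $h_k$ is the (magnitude of the) channel coefficient of sensor $k$, $b_k$ its transmit scaling factor, $g$ the receiver scaling factor, $\sigma^2$ the receiver noise variance, and $P$ a sum-power limit. All variables are taken real (phases having been aligned), with $h_k>0$. *)

theory Defs
  imports Complex_Main
begin

definition mse :: "nat \<Rightarrow> (nat \<Rightarrow> real) \<Rightarrow> real \<Rightarrow> real \<Rightarrow> (nat \<Rightarrow> real) \<Rightarrow> real" where
  "mse K h \<sigma>2 g b = (\<Sum>k=1..K. (g * h k * b k - 1)^2) + \<sigma>2 * g^2"

end

theory Submission
  imports Defs
begin

text \<open>Writing \<open>c\<^sub>k = g b\<^sub>k\<close>, the power constraint gives
  \<open>\<sigma>\<^sup>2 g\<^sup>2 \<ge> (\<sigma>\<^sup>2/P) \<Sum>\<^sub>k c\<^sub>k\<^sup>2\<close>, so the MSE dominates a sum of decoupled scalar quadratics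
  \<open>(h\<^sub>k c\<^sub>k - 1)\<^sup>2 + (\<sigma>\<^sup>2/P) c\<^sub>k\<^sup>2\<close>. Completing the square, each of them is minimised at
  \<open>c\<^sub>k = \<beta>\<^sub>k\<close> with value \<open>\<sigma>\<^sup>2/(\<sigma>\<^sup>2 + P h\<^sub>k\<^sup>2)\<close>. Both relaxation steps are tight for
  \<open>(g\<^sup>\<star>, b\<^sup>\<star>)\<close>: it uses full power and satisfies \<open>g\<^sup>\<star> b\<^sup>\<star>\<^sub>k = \<beta>\<^sub>k\<close>.\<close>

lemma quadratic_completed_square:
  fixes h s P c :: real
  assumes "P \<noteq> 0" and "s + P * h^2 \<noteq> 0"
  shows "(h * c - 1)^2 + s / P * c^2
         = s / (s + P * h^2) + (s + P * h^2) / P * (c - P * h / (s + P * h^2))^2"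
proof -
  define D where "D = s + P * h^2"
  have D: "D \<noteq> 0" using assms(2) by (simp add: D_def)
  have numerators: "P * D * (h * c - 1)^2 + D * s * c^2 = P * s + (D * c - P * h)^2"
    unfolding D_def by (simp add: power2_eq_square algebra_simps)
  have "(h * c - 1)^2 + s / P * c^2 = (P * D * (h * c - 1)^2 + D * s * c^2) / (P * D)"
    using D assms(1) by (simp add: field_simps)
  also have "\<dots> = s / D + D / P * (c - P * h / D)^2"
    unfolding numerators using D assms(1) by (simp add: field_simps power2_eq_square)
  finally show ?thesis unfolding D_def .
qed

lemma quadratic_ge_min:
  fixes h s P c :: real
  assumes "s > 0" and "P > 0"
  shows "s / (s + P * h^2) \<le> (h * c - 1)^2 + s / P * c^2"
proof -
  have D: "s + P * h^2 > 0" using assms by (simp add: add_pos_nonneg)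
  then have "(s + P * h^2) / P * (c - P * h / (s + P * h^2))^2 \<ge> 0"
    using assms by simp
  then show ?thesis using quadratic_completed_square[of P s h c] assms D by simp
qed

lemma quadratic_at_argmin:
  fixes h s P :: real
  assumes "s > 0" and "P > 0"
  defines "c \<equiv> P * h / (s + P * h^2)"
  shows "(h * c - 1)^2 + s / P * c^2 = s / (s + P * h^2)"
proof -
  have "s + P * h^2 > 0" using assms by (simp add: add_pos_nonneg)
  then show ?thesis using quadratic_completed_square[of P s h c] assms by simp
qed

lemma mse_eq_decoupled:
  assumes "P \<noteq> 0"
  shows "mse K h s g b
         = (\<Sum>k=1..K. (h k * (g * b k) - 1)^2 + s / P * (g * b k)^2)
           + s * g^2 / P * (P - (\<Sum>k=1..K. (b k)^2))"
  using assms unfolding mse_def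
  by (simp add: sum.distrib sum_distrib_left power_mult_distrib algebra_simps)

lemma sum_squares_normalized:
  fixes \<beta> :: "'a \<Rightarrow> real" and A :: "'a set"
  assumes "(\<Sum>j\<in>A. (\<beta> j)^2) > 0" and "P > 0"
  shows "(\<Sum>k\<in>A. (\<beta> k * sqrt (P / (\<Sum>j\<in>A. (\<beta> j)^2)))^2) = P"
  using assms by (simp add: power_mult_distrib flip: sum_distrib_right sum_divide_distrib)

lemma normalized_gain_product:
  fixes S P x :: real
  assumes "S > 0" and "P > 0"
  shows "sqrt (1 / P * S) * (x * sqrt (P / S)) = x"
proof -
  have "sqrt (1 / P * S) * sqrt (P / S) = 1"
    using assms by (simp flip: real_sqrt_mult)
  then show ?thesis by (metis mult.left_commute mult.right_neutral)
qed

theorem theorem1: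
  fixes K :: nat and h :: "nat \<Rightarrow> real" and \<sigma>2 P :: real
  assumes "K \<ge> 1" and "\<And>k. k \<in> {1..K} \<Longrightarrow> h k > 0" and "\<sigma>2 > 0" and "P > 0"
  defines "\<beta> \<equiv> (\<lambda>k. P * h k / (\<sigma>2 + P * (h k)^2))"
  defines "MSEopt \<equiv> (\<Sum>k=1..K. \<sigma>2 / (\<sigma>2 + P * (h k)^2))"
  defines "gopt \<equiv> sqrt ((1 / P) * (\<Sum>k=1..K. (\<beta> k)^2))"
  defines "bopt \<equiv> (\<lambda>k. \<beta> k * sqrt (P / (\<Sum>j=1..K. (\<beta> j)^2)))"
  shows "(\<forall>g b. (\<Sum>k=1..K. (b k)^2) \<le> P \<longrightarrow> MSEopt \<le> mse K h \<sigma>2 g b)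
         \<and> (\<Sum>k=1..K. (bopt k)^2) \<le> P
         \<and> mse K h \<sigma>2 gopt bopt = MSEopt"
proof (intro conjI allI impI)
  fix g and b :: "nat \<Rightarrow> real"
  assume power: "(\<Sum>k=1..K. (b k)^2) \<le> P"
  have "MSEopt \<le> (\<Sum>k=1..K. (h k * (g * b k) - 1)^2 + \<sigma>2 / P * (g * b k)^2)"
    unfolding MSEopt_def by (intro sum_mono quadratic_ge_min assms(3,4))
  also have "\<dots> \<le> mse K h \<sigma>2 g b"
    using mse_eq_decoupled[of P K h \<sigma>2 g b] power assms(3,4) by simp
  finally show "MSEopt \<le> mse K h \<sigma>2 g b" .
next
  have "\<sigma>2 + P * (h 1)^2 > 0"
    using assms(3,4) by (simp add: add_pos_nonneg)
  then have "0 < (\<beta> 1)^2"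
    using assms(1,4) assms(2)[of 1] unfolding \<beta>_def by simp
  also have "\<dots> \<le> (\<Sum>j=1..K. (\<beta> j)^2)"
    using assms(1) by (intro member_le_sum) auto
  finally have S: "(\<Sum>j=1..K. (\<beta> j)^2) > 0" .
  have full_power: "(\<Sum>k=1..K. (bopt k)^2) = P"
    unfolding bopt_def using sum_squares_normalized[OF S assms(4)] .
  then show "(\<Sum>k=1..K. (bopt k)^2) \<le> P" by simp
  have "gopt * bopt k = \<beta> k" for k
    unfolding gopt_def bopt_def using normalized_gain_product[OF S assms(4)] .
  then have "mse K h \<sigma>2 gopt bopt = (\<Sum>k=1..K. (h k * \<beta> k - 1)^2 + \<sigma>2 / P * (\<beta> k)^2)"
    using mse_eq_decoupled[of P K h \<sigma>2 gopt bopt] full_power assms(4) by simp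
  also have "\<dots> = MSEopt"
    unfolding MSEopt_def \<beta>_def by (intro sum.cong refl quadratic_at_argmin assms(3,4))
  finally show "mse K h \<sigma>2 gopt bopt = MSEopt" .
qed

end
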